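(* Let $f$ be an expansive Lorenz map with critical point $c$ and $H=(a,b)$ a hole with $a\le c\le b$, $a\ne b$. If $\tilde S^+_f(a,b)\not\subseteq\{0^\infty,1^\infty\}$ and the pair $(\mathbf b,\mathbf a)$ is not weak-admissible, then there exist $s,t\in\{0,1\}^{\mathbb N}$ such that $(1s,0t)$ is weak-admissible and $\Omega(1s,0t)=\tilde S^+_f(a,b)$.
   Context: Lorenz map: $f:[0,1]\to[0,1]$ with $c\in(0,1)$, $f$ strictly increasing on $[0,c)$ and $(c,1]$, $\lim_{x\uparrow c}f=1$, $\lim_{x\downarrow c}f=0$; expansive if $\bigcup_{n\ge0}f^{-n}(c)$ is dense. $\preceq$ is the lexicographic order on $\{0,1\}^{\mathbb N}$, $\sigma$ the left shift. Kneading sequences $\tau_f(x)=\epsilon_0\epsilon_1\cdots$ ($\epsilon_i=0$ if $f^i(x)<c$, $1$ if $f^i(x)>c$), and $\tau_f(x\pm)=\lim_{y\to x^\pm}\tau_f(y)$ over non-preimages $y$ of $c$. Put $\mathbf a=\tau_f(a-)$, $\mathbf b=\tau_f(b+)$, $\tilde S^+_f(a,b)=\{w: \sigma(\mathbf b)\preceq\sigma^n(w)\preceq\sigma(\mathbf a)\ \forall n\ge0\}$, and $\Omega(1s,0t)=\{w:s\preceq\sigma^n(w)\preceq t\ \forall n\ge0\}$. A pair $(k_+,k_-)$ of sequences is weak-admissible if $\sigma(k_+)\preceq\sigma^n(k_+)\preceq\sigma(k_-)$ and $\sigma(k_+)\preceq\sigma^n(k_-)\preceq\sigma(k_-)$ for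 all $n\ge0$. *)

theory Defs
  imports "HOL-Analysis.Analysis"
begin

text \<open>Sequences in {0,1}^N are modelled as nat => bool, with False = 0 and True = 1.\<close>

type_synonym seq = "nat \<Rightarrow> bool"

definition shift :: "seq \<Rightarrow> seq" where
  "shift w = (\<lambda>i. w (Suc i))"

definition shiftn :: "nat \<Rightarrow> seq \<Rightarrow> seq" where
  "shiftn n w = (\<lambda>i. w (i + n))"

definition scons :: "bool \<Rightarrow> seq \<Rightarrow> seq" where
  "scons e w = (\<lambda>i. if i = 0 then e else w (i - 1))"

definition lex_less :: "seq \<Rightarrow> seq \<Rightarrow> bool" where
  "lex_less w v \<longleftrightarrow> (\<exists>n. (\<forall>i<n. w i = v i) \<and> \<not> w n \<and> v n)"

definition lex_le :: "seq \<Rightarrow> seq \<Rightarrow> bool" where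
  "lex_le w v \<longleftrightarrow> w = v \<or> lex_less w v"

definition lorenz_map :: "(real \<Rightarrow> real) \<Rightarrow> real \<Rightarrow> bool" where
  "lorenz_map f c \<longleftrightarrow> 0 < c \<and> c < 1 \<and> f ` {0..1} \<subseteq> {0..1}
     \<and> strict_mono_on {0..<c} f \<and> strict_mono_on {c<..1} f
     \<and> (f \<longlongrightarrow> 1) (at_left c) \<and> (f \<longlongrightarrow> 0) (at_right c)"

definition preimage_c :: "(real \<Rightarrow> real) \<Rightarrow> real \<Rightarrow> real \<Rightarrow> bool" where
  "preimage_c f c x \<longleftrightarrow> (\<exists>n. (f ^^ n) x = c)"

definition expansive :: "(real \<Rightarrow> real) \<Rightarrow> real \<Rightarrow> bool" where
  "expansive f c \<longleftrightarrow> {0..1} \<subseteq> closure {x \<in> {0..1}. preimage_c f c x}"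

text \<open>Kneading sequence of a point (meaningful for non-preimages of c).\<close>
definition kneading :: "(real \<Rightarrow> real) \<Rightarrow> real \<Rightarrow> real \<Rightarrow> seq" where
  "kneading f c x = (\<lambda>i. c < (f ^^ i) x)"

text \<open>One-sided limits (coordinatewise, i.e. in the product topology) over non-preimages of c.\<close>
definition kneading_plus :: "(real \<Rightarrow> real) \<Rightarrow> real \<Rightarrow> real \<Rightarrow> seq" where
  "kneading_plus f c x = (\<lambda>i. THE e. eventually (\<lambda>y. kneading f c y i = e)
       (at x within {y. x < y \<and> y \<le> 1 \<and> \<not> preimage_c f c y}))"

definition kneading_minus :: "(real \<Rightarrow> real) \<Rightarrow> real \<Rightarrow> real \<Rightarrow> seq" where
  "kneading_minus f c x = (\<lambda>i. THE e. eventually (\<lambda>y. kneading f c y i = e)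
       (at x within {y. 0 \<le> y \<and> y < x \<and> \<not> preimage_c f c y}))"

text \<open>tilde S^+_f(a,b), with bold a = kneading_minus a, bold b = kneading_plus b.\<close>
definition tildeS :: "(real \<Rightarrow> real) \<Rightarrow> real \<Rightarrow> real \<Rightarrow> real \<Rightarrow> seq set" where
  "tildeS f c a b = {w. \<forall>n. lex_le (shift (kneading_plus f c b)) (shiftn n w)
                          \<and> lex_le (shiftn n w) (shift (kneading_minus f c a))}"

text \<open>Omega(1s,0t) = {w. s <= sigma^n w <= t for all n}.\<close>
definition Omega :: "seq \<Rightarrow> seq \<Rightarrow> seq set" where
  "Omega s t = {w. \<forall>n. lex_le s (shiftn n w) \<and> lex_le (shiftn n w) t}"

definition weak_admissible :: "seq \<Rightarrow> seq \<Rightarrow> bool" where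
  "weak_admissible kp km \<longleftrightarrow>
     (\<forall>n. lex_le (shift kp) (shiftn n kp) \<and> lex_le (shiftn n kp) (shift km)
        \<and> lex_le (shift kp) (shiftn n km) \<and> lex_le (shiftn n km) (shift km))"

end

theory Submission
  imports Defs
begin

(* tildeS f c a b is the shift-invariant set Omega (shift b) (shift a), which is closed for
   coordinatewise convergence and therefore contains its lexicographic minimum s and maximum t.
   A member using both symbols forces s to start with 0 and t with 1; shift invariance and the
   extremality of s and t then give Omega s t = tildeS f c a b and the weak admissibility of
   (1s, 0t). *)

lemma shiftn_0 [simp]: "shiftn 0 w = w"
  by (simp add: shiftn_def)

lemma shiftn_shiftn [simp]: "shiftn m (shiftn n w) = shiftn (m + n) w"
  by (simp add: shiftn_def add.assoc)

lemma shift_eq_shiftn_1: "shift w = shiftn 1 w"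
  by (simp add: shift_def shiftn_def)

lemma shift_scons [simp]: "shift (scons e w) = w"
  by (simp add: shift_def scons_def)

lemma shiftn_Suc_scons [simp]: "shiftn (Suc m) (scons e w) = shiftn m w"
  by (simp add: shiftn_def scons_def)

lemma scons_head_shift: "scons (w 0) (shift w) = w"
  by (rule ext) (simp add: scons_def shift_def)


lemma lex_less_irrefl: "\<not> lex_less w w"
  by (auto simp: lex_less_def)

lemma lex_less_trans:
  assumes "lex_less u v" "lex_less v w"
  shows "lex_less u w"
proof -
  obtain n where n: "\<forall>i<n. u i = v i" "\<not> u n" "v n"
    using assms(1) by (auto simp: lex_less_def)
  obtain m where m: "\<forall>i<m. v i = w i" "\<not> v m" "w m"
    using assms(2) by (auto simp: lex_less_def)
  have "n \<noteq> m"
    using n m by blast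
  then show ?thesis
    using n m unfolding lex_less_def
    by (cases "n < m") (auto intro!: exI[of _ "min n m"])
qed

lemma lex_less_linear:
  assumes "w \<noteq> v"
  shows "lex_less w v \<or> lex_less v w"
proof -
  define n where "n = (LEAST n. w n \<noteq> v n)"
  have "\<exists>n. w n \<noteq> v n"
    using assms by (auto simp: fun_eq_iff)
  then have "w n \<noteq> v n"
    unfolding n_def by (rule LeastI_ex)
  moreover have "\<forall>i<n. w i = v i"
    using not_less_Least n_def by blast
  ultimately show ?thesis
    unfolding lex_less_def by (cases "v n") (auto intro!: exI[of _ n])
qed

lemma lex_le_trans: "lex_le u v \<Longrightarrow> lex_le v w \<Longrightarrow> lex_le u w"
  unfolding lex_le_def using lex_less_trans by blast

lemma not_lex_less_iff: "\<not> lex_less w v \<longleftrightarrow> lex_le v w"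
proof
  show "\<not> lex_less w v \<Longrightarrow> lex_le v w"
    unfolding lex_le_def using lex_less_linear by blast
  show "lex_le v w \<Longrightarrow> \<not> lex_less w v"
    unfolding lex_le_def using lex_less_trans lex_less_irrefl by metis
qed

lemma lex_less_scons_same: "lex_less (scons e v) (scons e w) \<longleftrightarrow> lex_less v w"
proof
  assume "lex_less (scons e v) (scons e w)"
  then obtain n where n: "\<forall>i<n. scons e v i = scons e w i" "\<not> scons e v n" "scons e w n"
    by (auto simp: lex_less_def)
  then obtain m where "n = Suc m"
    by (cases n) (auto simp: scons_def)
  then show "lex_less v w"
    using n unfolding lex_less_def scons_def
    by (intro exI[of _ m]) (metis Suc_less_eq diff_Suc_1 nat.distinct(1))
next
  assume "lex_less v w"
  then obtain n where n: "\<forall>i<n. v i = w i" "\<not> v n" "w n"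
    by (auto simp: lex_less_def)
  then show "lex_less (scons e v) (scons e w)"
    unfolding lex_less_def scons_def
    by (intro exI[of _ "Suc n"]) (auto simp: less_Suc_eq_0_disj)
qed

lemma lex_le_scons_same: "lex_le (scons e v) (scons e w) \<longleftrightarrow> lex_le v w"
  unfolding lex_le_def lex_less_scons_same by (metis shift_scons)

lemma lex_less_scons_False_True: "lex_less (scons False v) (scons True w)"
  unfolding lex_less_def by (intro exI[of _ 0]) (simp add: scons_def)

lemma lex_le_head_False: "lex_le s v \<Longrightarrow> \<not> v 0 \<Longrightarrow> \<not> s 0"
  unfolding lex_le_def lex_less_def by auto

lemma lex_le_head_True: "lex_le v t \<Longrightarrow> v 0 \<Longrightarrow> t 0"
  unfolding lex_le_def lex_less_def by auto

text \<open>Strict comparisons are decided by a finite prefix, so non-strict ones pass to limits.\<close>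

lemma lex_ge_limit:
  assumes "\<And>N. \<exists>u. lex_le L u \<and> (\<forall>i<N. u i = v i)"
  shows "lex_le L v"
proof (rule ccontr)
  assume "\<not> lex_le L v"
  then have "lex_less v L"
    using not_lex_less_iff by blast
  then obtain n where n: "\<forall>i<n. v i = L i" "\<not> v n" "L n"
    unfolding lex_less_def by blast
  obtain u where "lex_le L u" "\<forall>i<Suc n. u i = v i"
    using assms by blast
  moreover from this have "lex_less u L"
    using n unfolding lex_less_def by (intro exI[of _ n]) auto
  ultimately show False
    using not_lex_less_iff by blast
qed

lemma lex_le_limit:
  assumes "\<And>N. \<exists>u. lex_le u U \<and> (\<forall>i<N. u i = v i)"
  shows "lex_le v U"
proof (rule ccontr)
  assume "\<not> lex_le v U"
  then have "lex_less U v"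
    using not_lex_less_iff by blast
  then obtain n where n: "\<forall>i<n. U i = v i" "\<not> U n" "v n"
    unfolding lex_less_def by blast
  obtain u where "lex_le u U" "\<forall>i<Suc n. u i = v i"
    using assms by blast
  moreover from this have "lex_less U u"
    using n unfolding lex_less_def by (intro exI[of _ n]) auto
  ultimately show False
    using not_lex_less_iff by blast
qed


definition seq_closed :: "seq set \<Rightarrow> bool" where
  "seq_closed X \<longleftrightarrow> (\<forall>v. (\<forall>N. \<exists>u\<in>X. \<forall>i<N. u i = v i) \<longrightarrow> v \<in> X)"

lemma shiftn_Omega: "w \<in> Omega L U \<Longrightarrow> shiftn m w \<in> Omega L U"
  by (simp add: Omega_def)

lemma Omega_bounds:
  assumes "w \<in> Omega L U"
  shows "lex_le L w \<and> lex_le w U"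
proof -
  have "lex_le L (shiftn 0 w) \<and> lex_le (shiftn 0 w) U"
    using assms unfolding Omega_def by blast
  then show ?thesis
    by simp
qed

lemma seq_closed_Omega: "seq_closed (Omega L U)"
  unfolding seq_closed_def
proof (intro allI impI)
  fix v
  assume approx: "\<forall>N. \<exists>u\<in>Omega L U. \<forall>i<N. u i = v i"
  have approx_shiftn: "\<exists>u. lex_le L u \<and> lex_le u U \<and> (\<forall>i<N. u i = shiftn m v i)" for m N
  proof -
    obtain u where u: "u \<in> Omega L U" "\<forall>i<N + m. u i = v i"
      using approx by blast
    have "lex_le L (shiftn m u) \<and> lex_le (shiftn m u) U"
      using u(1) by (intro Omega_bounds shiftn_Omega)
    moreover have "\<forall>i<N. shiftn m u i = shiftn m v i"
      using u(2) by (simp add: shiftn_def)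
    ultimately show ?thesis
      by blast
  qed
  have "lex_le L (shiftn m v)" "lex_le (shiftn m v) U" for m
    by (rule lex_ge_limit, use approx_shiftn in blast) (rule lex_le_limit, use approx_shiftn in blast)
  then show "v \<in> Omega L U"
    by (simp add: Omega_def)
qed

text \<open>The greedy construction of the least element: digit n is 0 whenever some member of X
  with the prefix chosen so far has digit n equal to 0.\<close>

primrec least_prefix :: "seq set \<Rightarrow> nat \<Rightarrow> seq" where
  "least_prefix X 0 = (\<lambda>_. False)"
| "least_prefix X (Suc n) = (least_prefix X n)
     (n := \<not> (\<exists>w\<in>X. (\<forall>i<n. w i = least_prefix X n i) \<and> \<not> w n))"

definition lex_min :: "seq set \<Rightarrow> seq" where
  "lex_min X = (\<lambda>n. least_prefix X (Suc n) n)"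

lemma least_prefix_stable: "i < m \<Longrightarrow> m \<le> n \<Longrightarrow> least_prefix X n i = least_prefix X m i"
  by (induction n) (auto simp: le_Suc_eq)

lemma lex_min_eq_least_prefix: "i < n \<Longrightarrow> lex_min X i = least_prefix X n i"
  unfolding lex_min_def by (metis Suc_leI lessI least_prefix_stable)

lemma least_prefix_realised:
  assumes "X \<noteq> {}"
  shows "\<exists>w\<in>X. \<forall>i<n. w i = least_prefix X n i"
proof (induction n)
  case 0
  then show ?case
    using assms by auto
next
  case (Suc n)
  then obtain w where w: "w \<in> X" "\<forall>i<n. w i = least_prefix X n i"
    by blast
  show ?case
  proof (cases "\<exists>w\<in>X. (\<forall>i<n. w i = least_prefix X n i) \<and> \<not> w n")
    case True
    then obtain u where "u \<in> X" "\<forall>i<n. u i = least_prefix X n i" "\<not> u n"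
      by blast
    then show ?thesis
      by (intro bexI[of _ u]) (auto simp: less_Suc_eq)
  next
    case False
    then have "w n"
      using w by blast
    then show ?thesis
      using w False by (intro bexI[of _ w]) (auto simp: less_Suc_eq)
  qed
qed

lemma lex_min_le:
  assumes "w \<in> X"
  shows "lex_le (lex_min X) w"
proof (rule ccontr)
  assume "\<not> lex_le (lex_min X) w"
  then have "lex_less w (lex_min X)"
    using not_lex_less_iff by blast
  then obtain n where n: "\<forall>i<n. w i = lex_min X i" "\<not> w n" "lex_min X n"
    unfolding lex_less_def by blast
  then have "\<exists>w\<in>X. (\<forall>i<n. w i = least_prefix X n i) \<and> \<not> w n"
    using assms lex_min_eq_least_prefix by auto
  then have "\<not> least_prefix X (Suc n) n"
    by (simp only: least_prefix.simps fun_upd_same not_not)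
  then show False
    using n(3) unfolding lex_min_def by blast
qed

lemma lex_min_in:
  assumes "seq_closed X" "X \<noteq> {}"
  shows "lex_min X \<in> X"
proof -
  have "\<exists>u\<in>X. \<forall>i<N. u i = lex_min X i" for N
    using least_prefix_realised[OF assms(2), of N] lex_min_eq_least_prefix by simp
  with assms(1) show ?thesis
    unfolding seq_closed_def by blast
qed

definition compl_seq :: "seq \<Rightarrow> seq" where
  "compl_seq w = (\<lambda>i. \<not> w i)"

lemma compl_seq_compl_seq [simp]: "compl_seq (compl_seq w) = w"
  by (simp add: compl_seq_def)

lemma lex_le_compl_seq: "lex_le (compl_seq w) (compl_seq v) \<longleftrightarrow> lex_le v w"
  unfolding lex_le_def lex_less_def compl_seq_def by (auto simp: fun_eq_iff)

lemma compl_seq_Omega: "compl_seq ` Omega L U = Omega (compl_seq U) (compl_seq L)"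
proof -
  have "w \<in> Omega L U \<longleftrightarrow> compl_seq w \<in> Omega (compl_seq U) (compl_seq L)" for w
  proof -
    have "shiftn n (compl_seq w) = compl_seq (shiftn n w)" for n
      by (simp add: shiftn_def compl_seq_def)
    then show ?thesis
      by (simp add: Omega_def lex_le_compl_seq conj_commute)
  qed
  then show ?thesis
    by (auto simp: image_iff) (metis compl_seq_compl_seq)
qed

lemma Omega_lex_min_max:
  assumes "Omega L U \<noteq> {}"
  obtains s t where "s \<in> Omega L U" "t \<in> Omega L U"
    "\<And>w. w \<in> Omega L U \<Longrightarrow> lex_le s w \<and> lex_le w t"
proof -
  define Y where "Y = compl_seq ` Omega L U"
  have "seq_closed Y"
    by (simp add: Y_def compl_seq_Omega seq_closed_Omega)
  moreover have "Y \<noteq> {}"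
    using assms by (simp add: Y_def)
  ultimately have "lex_min Y \<in> Y"
    by (rule lex_min_in)
  show ?thesis
  proof (rule that)
    show "lex_min (Omega L U) \<in> Omega L U"
      using assms seq_closed_Omega lex_min_in by blast
    show "compl_seq (lex_min Y) \<in> Omega L U"
      using \<open>lex_min Y \<in> Y\<close> by (auto simp: Y_def)
    fix w
    assume "w \<in> Omega L U"
    then show "lex_le (lex_min (Omega L U)) w \<and> lex_le w (compl_seq (lex_min Y))"
      using lex_min_le[of "compl_seq w" Y] lex_min_le lex_le_compl_seq
      by (metis Y_def compl_seq_compl_seq image_eqI)
  qed
qed


lemma Omega_eq_Omega_extrema:
  assumes "s \<in> Omega L U" "t \<in> Omega L U"
    and "\<And>w. w \<in> Omega L U \<Longrightarrow> lex_le s w \<and> lex_le w t"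
  shows "Omega s t = Omega L U"
proof
  have "lex_le L s" "lex_le t U"
    using assms(1,2) Omega_bounds by blast+
  then show "Omega s t \<subseteq> Omega L U"
    unfolding Omega_def using lex_le_trans by blast
  show "Omega L U \<subseteq> Omega s t"
  proof
    fix w
    assume "w \<in> Omega L U"
    then have "shiftn n w \<in> Omega L U" for n
      by (rule shiftn_Omega)
    then show "w \<in> Omega s t"
      using assms(3) unfolding Omega_def[of s t] by blast
  qed
qed

lemma weak_admissible_scons_True_False:
  assumes "s \<in> Omega s t" "t \<in> Omega s t" "\<not> s 0" "t 0"
  shows "weak_admissible (scons True s) (scons False t)"
proof -
  have s_eq: "s = scons False (shift s)" and t_eq: "t = scons True (shift t)"
    using scons_head_shift[of s] scons_head_shift[of t] assms(3,4) by simp_all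
  have s_shifts: "lex_le s (shiftn n s) \<and> lex_le (shiftn n s) t"
    and t_shifts: "lex_le s (shiftn n t) \<and> lex_le (shiftn n t) t" for n
    using assms(1,2) by (simp_all add: Omega_def)
  have head: "lex_le s (scons True s)" "lex_le (scons True s) t"
    "lex_le s (scons False t)" "lex_le (scons False t) t"
  proof -
    show "lex_le s (scons True s)" "lex_le (scons False t) t"
      using lex_less_scons_False_True s_eq t_eq lex_le_def by metis+
    show "lex_le (scons True s) t"
      using t_shifts[of 1] t_eq lex_le_scons_same shift_eq_shiftn_1 by metis
    show "lex_le s (scons False t)"
      using s_shifts[of 1] s_eq lex_le_scons_same shift_eq_shiftn_1 by metis
  qed
  show ?thesis
    unfolding weak_admissible_def shift_scons
  proof
    fix n
    show "lex_le s (shiftn n (scons True s)) \<and> lex_le (shiftn n (scons True s)) t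
      \<and> lex_le s (shiftn n (scons False t)) \<and> lex_le (shiftn n (scons False t)) t"
      using head s_shifts t_shifts by (cases n) simp_all
  qed
qed

lemma Omega_eq_Omega_weak_admissible:
  assumes "w \<in> Omega L U" "w \<noteq> (\<lambda>_. False)" "w \<noteq> (\<lambda>_. True)"
  shows "\<exists>s t. weak_admissible (scons True s) (scons False t) \<and> Omega s t = Omega L U"
proof -
  obtain s t where st: "s \<in> Omega L U" "t \<in> Omega L U"
    "\<And>w. w \<in> Omega L U \<Longrightarrow> lex_le s w \<and> lex_le w t"
    using Omega_lex_min_max assms(1) by blast
  have Omega_st: "Omega s t = Omega L U"
    using st by (rule Omega_eq_Omega_extrema)
  obtain k j where "\<not> w k" "w j"
    using assms(2,3) by (auto simp: fun_eq_iff)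
  moreover have "lex_le s (shiftn k w)" "lex_le (shiftn j w) t"
    using st(3)[OF shiftn_Omega[OF assms(1)]] by blast+
  ultimately have "\<not> s 0" "t 0"
    using lex_le_head_False[of s "shiftn k w"] lex_le_head_True[of "shiftn j w" t]
    by (simp_all add: shiftn_def)
  then have "weak_admissible (scons True s) (scons False t)"
    using st(1,2) Omega_st by (intro weak_admissible_scons_True_False) simp_all
  then show ?thesis
    using Omega_st by blast
qed

theorem lemma3p4:
  fixes f :: "real \<Rightarrow> real" and c a b :: real
  assumes "lorenz_map f c"
    and "expansive f c"
    and "0 \<le> a" and "b \<le> 1"
    and "a \<le> c" and "c \<le> b" and "a \<noteq> b"
    and "\<not> tildeS f c a b \<subseteq> {(\<lambda>_. False), (\<lambda>_. True)}"
    and "\<not> weak_admissible (kneading_plus f c b) (kneading_minus f c a)"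
  shows "\<exists>s t. weak_admissible (scons True s) (scons False t)
               \<and> Omega s t = tildeS f c a b"
proof -
  have tildeS_eq: "tildeS f c a b
      = Omega (shift (kneading_plus f c b)) (shift (kneading_minus f c a))"
    by (simp add: tildeS_def Omega_def)
  obtain w where "w \<in> tildeS f c a b" "w \<noteq> (\<lambda>_. False)" "w \<noteq> (\<lambda>_. True)"
    using assms(8) by blast
  then show ?thesis
    unfolding tildeS_eq by (rule Omega_eq_Omega_weak_admissible)
qed

end
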